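(* Let $C_2\subseteq C_1\subseteq\mathbb{F}_2^n$ be linear codes, $Q=Q(C_1,C_2)$ the corresponding CSS code, and $N=2^\ell$ with $\ell$ a positive integer. If $(1,\ldots,1)\in H_N$, then $C_2\subseteq (C_1^{\ell-1})^{\perp}$.
   Context: $\omega=e^{2\pi\mathbf{i}/N}$, $U(a)=\mathrm{diag}(1,\omega^a)$ for $a\in\mathbb{Z}_N$, $U(b)=\bigotimes_{i=1}^nU(b_i)$ for $b\in\mathbb{Z}_N^n$. $Q(C_1,C_2)$ is the subspace of $(\mathbb{C}^2)^{\otimes n}$ stabilized by all $X(u)Z(v)$, $u\in C_2$, $v\in C_1^\perp$ (Pauli operators $X(u)=\bigotimes X^{u_i}$, $Z(v)=\bigotimes Z^{v_i}$). $H_N=\{b\in\mathbb{Z}_N^n: U(b)Q=Q\}$. For $r\ge1$, $C_1^r=C_1\star\cdots\star C_1$ ($r$ times) is the $\mathbb{F}_2$-linear span of the componentwise products $c_1\star\cdots\star c_r$ with $c_i\in C_1$, and $C_1^0$ is the span of $(1,\ldots,1)$; $\perp$ is the dual over $\mathbb{F}_2$ with respect to the standard dot product. *)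

theory Defs
  imports Complex_Main
begin

text \<open>Binary vectors of length n: functions nat => bool vanishing outside {0..<n}.
  Addition in F_2^n is pointwise xor, componentwise product is pointwise conjunction.\<close>

definition bvec :: "nat \<Rightarrow> (nat \<Rightarrow> bool) set" where
  "bvec n = {x. \<forall>i\<ge>n. \<not> x i}"

definition badd :: "(nat \<Rightarrow> bool) \<Rightarrow> (nat \<Rightarrow> bool) \<Rightarrow> (nat \<Rightarrow> bool)" where
  "badd x y = (\<lambda>i. x i \<noteq> y i)"

definition linear_code :: "nat \<Rightarrow> (nat \<Rightarrow> bool) set \<Rightarrow> bool" where
  "linear_code n C \<longleftrightarrow> C \<subseteq> bvec n \<and> (\<lambda>i. False) \<in> C \<and>
     (\<forall>x\<in>C. \<forall>y\<in>C. badd x y \<in> C)"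

definition bdot :: "nat \<Rightarrow> (nat \<Rightarrow> bool) \<Rightarrow> (nat \<Rightarrow> bool) \<Rightarrow> nat" where
  "bdot n x y = card {i. i < n \<and> x i \<and> y i} mod 2"

definition dual_code :: "nat \<Rightarrow> (nat \<Rightarrow> bool) set \<Rightarrow> (nat \<Rightarrow> bool) set" where
  "dual_code n C = {x \<in> bvec n. \<forall>c\<in>C. bdot n x c = 0}"

definition fspan :: "nat \<Rightarrow> (nat \<Rightarrow> bool) set \<Rightarrow> (nat \<Rightarrow> bool) set" where
  "fspan n S = \<Inter>{D. linear_code n D \<and> S \<subseteq> D}"

definition all_ones :: "nat \<Rightarrow> (nat \<Rightarrow> bool)" where
  "all_ones n = (\<lambda>i. i < n)"

definition star_power :: "nat \<Rightarrow> (nat \<Rightarrow> bool) set \<Rightarrow> nat \<Rightarrow> (nat \<Rightarrow> bool) set" where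
  "star_power n C r =
     (if r = 0 then fspan n {all_ones n}
      else fspan n {x. \<exists>c :: nat \<Rightarrow> (nat \<Rightarrow> bool). (\<forall>j<r. c j \<in> C) \<and>
                        x = (\<lambda>i. i < n \<and> (\<forall>j<r. c j i))})"

text \<open>States of (C^2)^{\<otimes> n}: amplitude functions on computational basis vectors in F_2^n,
  zero outside bvec n.\<close>
type_synonym state = "(nat \<Rightarrow> bool) \<Rightarrow> complex"

definition states :: "nat \<Rightarrow> state set" where
  "states n = {\<psi>. \<forall>x. x \<notin> bvec n \<longrightarrow> \<psi> x = 0}"

text \<open>X(u) |x> = |x+u>, Z(v) |x> = (-1)^{v.x} |x>.\<close>
definition Xop :: "(nat \<Rightarrow> bool) \<Rightarrow> state \<Rightarrow> state" where
  "Xop u \<psi> = (\<lambda>x. \<psi> (badd x u))"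

definition Zop :: "nat \<Rightarrow> (nat \<Rightarrow> bool) \<Rightarrow> state \<Rightarrow> state" where
  "Zop n v \<psi> = (\<lambda>x. (-1) ^ bdot n v x * \<psi> x)"

definition CSS :: "nat \<Rightarrow> (nat \<Rightarrow> bool) set \<Rightarrow> (nat \<Rightarrow> bool) set \<Rightarrow> state set" where
  "CSS n C1 C2 = {\<psi> \<in> states n. \<forall>u\<in>C2. \<forall>v\<in>dual_code n C1. Xop u (Zop n v \<psi>) = \<psi>}"

definition omega :: "nat \<Rightarrow> complex" where
  "omega N = exp (2 * pi * \<i> / of_nat N)"

text \<open>U(b) = tensor of diag(1, omega^{b_i}): U(b)|x> = omega^{sum_i b_i x_i} |x>.
  Elements of Z_N are represented by integers in {0..<N}.\<close>
definition Uop :: "nat \<Rightarrow> nat \<Rightarrow> (nat \<Rightarrow> int) \<Rightarrow> state \<Rightarrow> state" where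
  "Uop n N b \<psi> = (\<lambda>x. omega N powi (\<Sum>i<n. (if x i then b i else 0)) * \<psi> x)"

definition HN :: "nat \<Rightarrow> nat \<Rightarrow> (nat \<Rightarrow> bool) set \<Rightarrow> (nat \<Rightarrow> bool) set \<Rightarrow> (nat \<Rightarrow> int) set" where
  "HN n N C1 C2 = {b. (\<forall>i<n. 0 \<le> b i \<and> b i < int N) \<and> (\<forall>i\<ge>n. b i = 0) \<and>
                    Uop n N b ` CSS n C1 C2 = CSS n C1 C2}"

definition ones_Z :: "nat \<Rightarrow> (nat \<Rightarrow> int)" where
  "ones_Z n = (\<lambda>i. if i < n then 1 else 0)"

end

theory Submission
  imports Defs "HOL-Analysis.Analysis"
begin

text \<open>
  For a codeword x of C1 the uniform superposition over the coset x + C2 lies in Q, and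
  U(1,...,1) multiplies its basis vectors by omega to the power of their Hamming weights.
  Since U(1,...,1) preserves Q, the result is still fixed by X(u) for u in C2, so all weights
  in x + C2 agree modulo 2^l. With x = 0 this gives 2^l | wt u, and then
  wt (x + u) = wt x + wt u - 2 wt (x * u) gives 2^(l-1) | wt (u * x) for all x in C1.
  This divisibility propagates: multiplying u by a further codeword of C1 costs one factor of 2,
  so u * c_1 * ... * c_(l-1) has even weight, i.e. u is orthogonal to the generators of C1^(l-1).
\<close>

definition weight :: "nat \<Rightarrow> (nat \<Rightarrow> bool) \<Rightarrow> int" where
  "weight n x = int (card {i. i < n \<and> x i})"

definition bmul :: "(nat \<Rightarrow> bool) \<Rightarrow> (nat \<Rightarrow> bool) \<Rightarrow> (nat \<Rightarrow> bool)" where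
  "bmul x y = (\<lambda>i. x i \<and> y i)"

lemma weight_zero [simp]: "weight n (\<lambda>i. False) = 0"
  by (simp add: weight_def)

lemma weight_badd: "weight n (badd x y) = weight n x + weight n y - 2 * weight n (bmul x y)"
proof -
  let ?X = "{i. i < n \<and> x i}" and ?Y = "{i. i < n \<and> y i}"
  have "{i. i < n \<and> badd x y i} = (?X - ?Y) \<union> (?Y - ?X)"
    by (auto simp: badd_def)
  moreover have "{i. i < n \<and> bmul x y i} = ?X \<inter> ?Y"
    by (auto simp: bmul_def)
  moreover have "card ((?X - ?Y) \<union> (?Y - ?X)) = card (?X - ?Y) + card (?Y - ?X)"
    by (rule card_Un_disjoint) auto
  moreover have "card ?X = card (?X - ?Y) + card (?X \<inter> ?Y)"
    "card ?Y = card (?Y - ?X) + card (?X \<inter> ?Y)"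
    by (simp_all add: card_Diff_subset_Int Int_commute card_mono le_add_diff_inverse2)
  ultimately show ?thesis
    unfolding weight_def by simp
qed

lemma bdot_eq_weight_mod_2: "int (bdot n x y) = weight n (bmul x y) mod 2"
  unfolding bdot_def weight_def bmul_def by (simp add: zmod_int)

definition orth :: "nat \<Rightarrow> (nat \<Rightarrow> bool) \<Rightarrow> (nat \<Rightarrow> bool) set" where
  "orth n u = {x \<in> bvec n. bdot n u x = 0}"

lemma linear_code_orth: "linear_code n (orth n u)"
proof -
  have "bdot n u (badd x y) = 0" if "bdot n u x = 0" "bdot n u y = 0" for x y
  proof -
    have "bmul u (badd x y) = badd (bmul u x) (bmul u y)"
      by (auto simp: bmul_def badd_def)
    then have "weight n (bmul u (badd x y)) =
        weight n (bmul u x) + weight n (bmul u y) - 2 * weight n (bmul (bmul u x) (bmul u y))"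
      by (simp add: weight_badd)
    moreover have "weight n (bmul u x) mod 2 = 0" "weight n (bmul u y) mod 2 = 0"
      using that bdot_eq_weight_mod_2[of n u x, symmetric] bdot_eq_weight_mod_2[of n u y, symmetric]
      by simp_all
    ultimately have "weight n (bmul u (badd x y)) mod 2 = 0"
      by presburger
    then show ?thesis
      using bdot_eq_weight_mod_2[of n u "badd x y"] by simp
  qed
  then show ?thesis
    by (auto simp: linear_code_def orth_def bvec_def badd_def bdot_def)
qed

lemma fspan_least: "linear_code n D \<Longrightarrow> S \<subseteq> D \<Longrightarrow> fspan n S \<subseteq> D"
  unfolding fspan_def by blast

text \<open>For r = 0 the hypothesis just says that u has even weight, which is orthogonality to the
  generator all_ones n of C^0; so both cases of star_power are handled uniformly.\<close>

lemma mem_dual_code_star_power: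
  assumes "u \<in> bvec n"
    and even: "\<And>c. \<forall>j<r. c j \<in> C \<Longrightarrow> even (weight n (\<lambda>i. u i \<and> (\<forall>j<r. c j i)))"
  shows "u \<in> dual_code n (star_power n C r)"
proof -
  have "x \<in> orth n u" if "\<forall>j<r. c j \<in> C" "x = (\<lambda>i. i < n \<and> (\<forall>j<r. c j i))" for c x
  proof -
    have "{i. i < n \<and> bmul u x i} = {i. i < n \<and> u i \<and> (\<forall>j<r. c j i)}"
      using that(2) by (auto simp: bmul_def)
    then have "even (weight n (bmul u x))"
      using even[OF that(1)] by (simp add: weight_def)
    moreover have "x \<in> bvec n"
      using that(2) by (simp add: bvec_def)
    ultimately show ?thesis
      using bdot_eq_weight_mod_2[of n u x] by (simp add: orth_def even_iff_mod_2_eq_zero)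
  qed
  then have "star_power n C r \<subseteq> orth n u"
    unfolding star_power_def all_ones_def
    by (auto intro!: fspan_least[OF linear_code_orth])
  then show ?thesis
    using assms(1) by (auto simp: dual_code_def orth_def)
qed

definition weight_level :: "nat \<Rightarrow> (nat \<Rightarrow> bool) set \<Rightarrow> nat \<Rightarrow> (nat \<Rightarrow> bool) \<Rightarrow> bool" where
  "weight_level n C k w \<longleftrightarrow>
     (2::int) ^ Suc k dvd weight n w \<and> (\<forall>x\<in>C. (2::int) ^ k dvd weight n (bmul w x))"

lemma weight_level_bmul:
  assumes C: "linear_code n C" and w: "weight_level n C (Suc k) w" and "c \<in> C"
  shows "weight_level n C k (bmul w c)"
proof -
  have wc: "(2::int) ^ Suc k dvd weight n (bmul w c)"
    using w \<open>c \<in> C\<close> by (simp add: weight_level_def)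
  have "(2::int) ^ k dvd weight n (bmul (bmul w c) x)" if "x \<in> C" for x
  proof -
    have "badd c x \<in> C"
      using C \<open>c \<in> C\<close> \<open>x \<in> C\<close> by (simp add: linear_code_def)
    then have "(2::int) ^ Suc k dvd weight n (bmul w (badd c x))"
      "(2::int) ^ Suc k dvd weight n (bmul w x)"
      using w \<open>x \<in> C\<close> by (simp_all add: weight_level_def)
    moreover have "bmul w (badd c x) = badd (bmul w c) (bmul w x)"
      "bmul (bmul w c) (bmul w x) = bmul (bmul w c) x"
      by (auto simp: bmul_def badd_def)
    then have "2 * weight n (bmul (bmul w c) x) =
        weight n (bmul w c) + weight n (bmul w x) - weight n (bmul w (badd c x))"
      using weight_badd[of n "bmul w c" "bmul w x"] by simp
    ultimately have "(2::int) ^ Suc k dvd 2 * weight n (bmul (bmul w c) x)"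
      using wc by simp
    then show ?thesis
      by simp
  qed
  with wc show ?thesis
    by (simp add: weight_level_def)
qed

lemma weight_level_even_product:
  assumes "linear_code n C"
  shows "weight_level n C k w \<Longrightarrow> \<forall>j<k. c j \<in> C \<Longrightarrow> even (weight n (\<lambda>i. w i \<and> (\<forall>j<k. c j i)))"
proof (induction k arbitrary: w)
  case 0
  then show ?case
    by (simp add: weight_level_def)
next
  case (Suc k)
  have "weight_level n C k (bmul w (c k))"
    using weight_level_bmul[OF assms Suc.prems(1)] Suc.prems(2) by simp
  moreover have "(\<lambda>i. w i \<and> (\<forall>j<Suc k. c j i)) = (\<lambda>i. bmul w (c k) i \<and> (\<forall>j<k. c j i))"
    by (auto simp: bmul_def less_Suc_eq)
  ultimately show ?case
    using Suc.IH Suc.prems(2) by simp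
qed

lemma weight_level_if_weights_cong:
  assumes "(\<lambda>i. False) \<in> C"
    and cong: "\<And>x. x \<in> C \<Longrightarrow> (2::int) ^ Suc k dvd weight n (badd x u) - weight n x"
  shows "weight_level n C k u"
proof -
  have u: "(2::int) ^ Suc k dvd weight n u"
    using cong[OF assms(1)] by (simp add: badd_def)
  have "(2::int) ^ k dvd weight n (bmul u x)" if "x \<in> C" for x
  proof -
    have "(2::int) ^ Suc k dvd weight n u - 2 * weight n (bmul x u)"
      using cong[OF that] by (simp add: weight_badd)
    from dvd_diff[OF u this] have "(2::int) ^ Suc k dvd 2 * weight n (bmul x u)"
      by simp
    moreover have "bmul x u = bmul u x"
      by (auto simp: bmul_def)
    ultimately show ?thesis
      by simp
  qed
  with u show ?thesis
    by (simp add: weight_level_def)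
qed

lemma omega_powi_eq_iff:
  assumes "N > 0"
  shows "omega N powi a = omega N powi b \<longleftrightarrow> int N dvd a - b"
proof -
  define c where "c = 2 * pi * \<i> / of_nat N"
  have "c \<noteq> 0"
    using assms by (simp add: c_def)
  have powi: "omega N powi k = exp (of_int k * c)" for k
    unfolding omega_def c_def by (rule exp_power_int)
  have period: "of_int (2 * m) * pi * \<i> = of_int (m * int N) * c" for m
    using assms by (simp add: c_def field_simps)
  have "of_int a * c = of_int b * c + of_int (2 * m) * pi * \<i> \<longleftrightarrow> a - b = m * int N" for m
  proof -
    have "of_int a * c = of_int b * c + of_int (2 * m) * pi * \<i>
          \<longleftrightarrow> of_int (a - b) * c = of_int (m * int N) * c"
      unfolding period by (simp add: algebra_simps)
    also have "\<dots> \<longleftrightarrow> a - b = m * int N"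
      using \<open>c \<noteq> 0\<close> by (simp only: mult_cancel_right of_int_eq_iff) simp
    finally show ?thesis .
  qed
  then show ?thesis
    unfolding powi exp_eq by (auto simp: dvd_def mult.commute)
qed

definition phase_exponent :: "nat \<Rightarrow> (nat \<Rightarrow> int) \<Rightarrow> (nat \<Rightarrow> bool) \<Rightarrow> int" where
  "phase_exponent n b x = (\<Sum>i<n. if x i then b i else 0)"

lemma Uop_apply: "Uop n N b \<psi> x = omega N powi phase_exponent n b x * \<psi> x"
  by (simp add: Uop_def phase_exponent_def)

lemma phase_exponent_ones: "phase_exponent n (ones_Z n) x = weight n x"
proof -
  have "phase_exponent n (ones_Z n) x = (\<Sum>i \<in> {..<n} \<inter> {i. x i}. 1)"
    by (simp add: phase_exponent_def ones_Z_def sum.If_cases)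
  also have "{..<n} \<inter> {i. x i} = {i. i < n \<and> x i}"
    by auto
  finally show ?thesis
    by (simp add: weight_def)
qed

definition coset_state :: "(nat \<Rightarrow> bool) set \<Rightarrow> (nat \<Rightarrow> bool) \<Rightarrow> state" where
  "coset_state C x0 = (\<lambda>x. if badd x x0 \<in> C then 1 else 0)"

lemma badd_badd_cancel [simp]: "badd (badd x y) y = x"
  by (auto simp: badd_def)

lemma coset_state_mem_CSS:
  assumes C1: "linear_code n C1" and C2: "linear_code n C2" and "C2 \<subseteq> C1" and "x0 \<in> C1"
  shows "coset_state C2 x0 \<in> CSS n C1 C2"
proof -
  let ?\<psi> = "coset_state C2 x0"
  have "?\<psi> \<in> states n"
    using C1 C2 \<open>x0 \<in> C1\<close>
    by (fastforce simp: states_def coset_state_def linear_code_def bvec_def badd_def)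
  moreover have "Zop n v ?\<psi> = ?\<psi>" if "v \<in> dual_code n C1" for v
  proof
    fix x
    have "bdot n v x = 0" if "badd x x0 \<in> C2"
    proof -
      have "badd (badd x x0) x0 \<in> C1"
        using C1 \<open>C2 \<subseteq> C1\<close> \<open>x0 \<in> C1\<close> that unfolding linear_code_def by blast
      then show ?thesis
        using \<open>v \<in> dual_code n C1\<close> by (simp add: dual_code_def)
    qed
    then show "Zop n v ?\<psi> x = ?\<psi> x"
      by (simp add: Zop_def coset_state_def)
  qed
  moreover have "Xop u ?\<psi> = ?\<psi>" if "u \<in> C2" for u
  proof
    fix x
    have shift: "badd (badd x u) x0 = badd (badd x x0) u"
      by (auto simp: badd_def)
    have "badd (badd x u) x0 \<in> C2 \<longleftrightarrow> badd x x0 \<in> C2"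
      unfolding shift using C2 \<open>u \<in> C2\<close> by (metis badd_badd_cancel linear_code_def)
    then show "Xop u ?\<psi> x = ?\<psi> x"
      by (simp add: Xop_def coset_state_def)
  qed
  ultimately show ?thesis
    by (simp add: CSS_def)
qed

lemma CSS_Xop_eq:
  assumes "\<psi> \<in> CSS n C1 C2" and "u \<in> C2"
  shows "Xop u \<psi> = \<psi>"
proof -
  have "(\<lambda>i. False) \<in> dual_code n C1"
    by (simp add: dual_code_def bvec_def bdot_def)
  moreover have "Zop n (\<lambda>i. False) \<psi> = \<psi>"
    by (simp add: Zop_def bdot_def)
  ultimately show ?thesis
    using assms by (force simp: CSS_def)
qed

lemma HN_phase_exponent_cong:
  assumes "linear_code n C1" and "linear_code n C2" and "C2 \<subseteq> C1" and "N > 0"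
    and "b \<in> HN n N C1 C2" and "x0 \<in> C1" and "u \<in> C2"
  shows "int N dvd phase_exponent n b (badd x0 u) - phase_exponent n b x0"
proof -
  let ?\<psi> = "coset_state C2 x0"
  have "?\<psi> \<in> CSS n C1 C2"
    using coset_state_mem_CSS assms(1-3,6) .
  then have "Uop n N b ?\<psi> \<in> CSS n C1 C2"
    using \<open>b \<in> HN n N C1 C2\<close> by (auto simp: HN_def)
  then have "Uop n N b ?\<psi> (badd x0 u) = Uop n N b ?\<psi> x0"
    using CSS_Xop_eq[OF _ \<open>u \<in> C2\<close>] by (metis Xop_def)
  moreover have "badd (badd x0 u) x0 = u" "badd x0 x0 = (\<lambda>i. False)"
    by (auto simp: badd_def)
  then have "?\<psi> (badd x0 u) = 1" "?\<psi> x0 = 1"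
    using \<open>u \<in> C2\<close> assms(2) by (simp_all add: coset_state_def linear_code_def)
  ultimately have "omega N powi phase_exponent n b (badd x0 u) = omega N powi phase_exponent n b x0"
    by (simp add: Uop_apply)
  then show ?thesis
    using omega_powi_eq_iff[OF \<open>N > 0\<close>] by blast
qed

theorem corollary3p4:
  fixes n l N :: nat and C1 C2 :: "(nat \<Rightarrow> bool) set"
  assumes "linear_code n C1" and "linear_code n C2" and "C2 \<subseteq> C1"
    and "l > 0" and "N = 2 ^ l"
    and "ones_Z n \<in> HN n N C1 C2"
  shows "C2 \<subseteq> dual_code n (star_power n C1 (l - 1))"
proof
  fix u
  assume "u \<in> C2"
  have "(2::int) ^ Suc (l - 1) dvd weight n (badd x u) - weight n x" if "x \<in> C1" for x
    using HN_phase_exponent_cong[OF assms(1-3) _ assms(6) that \<open>u \<in> C2\<close>] assms(4,5)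
    by (simp add: phase_exponent_ones)
  then have "weight_level n C1 (l - 1) u"
    using assms(1) by (simp add: weight_level_if_weights_cong linear_code_def)
  moreover have "u \<in> bvec n"
    using assms(2) \<open>u \<in> C2\<close> by (auto simp: linear_code_def)
  ultimately show "u \<in> dual_code n (star_power n C1 (l - 1))"
    by (simp add: mem_dual_code_star_power weight_level_even_product[OF assms(1)])
qed

end
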